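(* Let $W:\mathcal X\to\mathcal Y$ be a binary-input DMC ($\mathcal X=\{0,1\}$), fix an input distribution and an integer $L\ge 2$, and let $(Q,\Phi)$, with $Q:\mathcal X\to\mathcal Z$ and $\Phi:\mathcal Z\to\mathcal Y$, be an optimizer of $$\min\{I(Q)-I(W):\ W\preccurlyeq Q \text{ via }\Phi,\ |\mathcal Z|\le L\},$$ such that the posterior vectors $\{\mathbf z\}_{z\in\mathcal Z}$ are pairwise distinct. Then $\{\mathbf z\}_{z\in\mathcal Z}\subseteq\{\mathbf y\}_{y\in\mathcal Y}$. Moreover, for $y\in\mathcal Y$ and $z\in\mathcal Z$, $\Phi(y|z)>0$ implies that $z$ is either the letter with the largest $z_0$ among those with $z_0\le y_0$, or the letter with the smallest $z_0$ among those with $z_0\ge y_0$.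
   Context: $\mathcal Y,\mathcal Z$ finite and disjoint from $\mathcal X=\{0,1\}$. $W\preccurlyeq Q$ via $\Phi$ means $W(y|x)=\sum_zQ(z|x)\Phi(y|z)$ for all $x,y$. A fixed input distribution $\pi(x)>0$ induces output probabilities $\pi_y=\sum_x\pi(x)W(y|x)>0$, $\pi_z=\sum_x\pi(x)Q(z|x)>0$, and posterior vectors $\mathbf y=(y_0,y_1)$ with $y_x=\pi(x)W(y|x)/\pi_y$ and $\mathbf z=(z_0,z_1)$ with $z_x=\pi(x)Q(z|x)/\pi_z$. $I(\cdot)$ is input–output mutual information (natural log). *)

theory Defs
  imports Complex_Main
begin

text \<open>Binary input alphabet X = {0,1} rendered as the subset {0,1} of nat.
  A channel from X to an output alphabet A (finite set) is a function
  C :: nat => 'a => real with C x a = C(a|x).\<close>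

definition inX :: "nat set" where "inX = {0, 1}"

definition is_channel :: "(nat \<Rightarrow> 'a \<Rightarrow> real) \<Rightarrow> 'a set \<Rightarrow> bool" where
  "is_channel C A \<longleftrightarrow> finite A \<and>
     (\<forall>x\<in>inX. (\<forall>a\<in>A. C x a \<ge> 0) \<and> (\<Sum>a\<in>A. C x a) = 1)"

text \<open>Phi z y = Phi(y|z), a channel from Z to Y.\<close>
definition is_stoch :: "('b \<Rightarrow> 'a \<Rightarrow> real) \<Rightarrow> 'b set \<Rightarrow> 'a set \<Rightarrow> bool" where
  "is_stoch Phi B A \<longleftrightarrow>
     (\<forall>b\<in>B. (\<forall>a\<in>A. Phi b a \<ge> 0) \<and> (\<Sum>a\<in>A. Phi b a) = 1)"

definition degraded_via ::
  "(nat \<Rightarrow> 'y \<Rightarrow> real) \<Rightarrow> 'y set \<Rightarrow> (nat \<Rightarrow> 'z \<Rightarrow> real) \<Rightarrow> 'z set \<Rightarrow> ('z \<Rightarrow> 'y \<Rightarrow> real) \<Rightarrow> bool"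
  where
  "degraded_via W Y Q Z Phi \<longleftrightarrow> is_stoch Phi Z Y \<and>
     (\<forall>x\<in>inX. \<forall>y\<in>Y. W x y = (\<Sum>z\<in>Z. Q x z * Phi z y))"

definition outp :: "(nat \<Rightarrow> real) \<Rightarrow> (nat \<Rightarrow> 'a \<Rightarrow> real) \<Rightarrow> 'a \<Rightarrow> real" where
  "outp p C a = (\<Sum>x\<in>inX. p x * C x a)"

definition post :: "(nat \<Rightarrow> real) \<Rightarrow> (nat \<Rightarrow> 'a \<Rightarrow> real) \<Rightarrow> 'a \<Rightarrow> nat \<Rightarrow> real" where
  "post p C a x = p x * C x a / outp p C a"

definition mutual_info :: "(nat \<Rightarrow> real) \<Rightarrow> (nat \<Rightarrow> 'a \<Rightarrow> real) \<Rightarrow> 'a set \<Rightarrow> real" where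
  "mutual_info p C A = (\<Sum>x\<in>inX. \<Sum>a\<in>A.
     (if p x * C x a = 0 then 0 else p x * C x a * ln (C x a / outp p C a)))"

end

theory Submission
  imports Defs
begin

text \<open>Write \<open>I(Q)\<close> as the sum over \<open>z, y\<close> of \<open>P(z,y) G(u z)\<close>, where \<open>u z\<close> is the posterior
  of input 0 given \<open>z\<close> and \<open>G t\<close> the divergence of \<open>(t, 1-t)\<close> from the prior. Every
  nonnegative joint law with posteriors \<open>t z\<close> that keeps, for each \<open>y\<close>, the mass and the
  posterior mean of column \<open>y\<close> is realised by an upgraded channel with at most \<open>|Z|\<close> letters, so
  the optimiser minimises this cost among all such splits. By strict convexity of \<open>G\<close>, no letter
  lies strictly between two letters used by the same \<open>y\<close>, which is the second claim. For the
  first, if \<open>u z\<close> were no posterior of \<open>W\<close>, move \<open>u z\<close> to a common point \<open>x\<close> while every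
  column using \<open>z\<close> rebalances \<open>z\<close> against a letter on the other side of its mean: the cost
  becomes a positive combination of chord values of \<open>G\<close>, which has no local minimum in \<open>x\<close>
  because, after multiplication by \<open>(x(1-x)) powr (2/3)\<close>, its derivative is strictly monotone.
  So some \<open>x\<close> lowers the cost.\<close>

section \<open>Binary divergence\<close>

lemma less_of_deriv_pos:
  fixes f f' :: "real \<Rightarrow> real"
  assumes "a < b" and "\<And>t. a \<le> t \<Longrightarrow> t \<le> b \<Longrightarrow> DERIV f t :> f' t"
    and "\<And>t. a < t \<Longrightarrow> t < b \<Longrightarrow> f' t > 0"
  shows "f a < f b"
proof (rule DERIV_pos_imp_increasing_open[OF assms(1)])
  show "continuous_on {a..b} f"
    using assms(2) by (blast intro: DERIV_atLeastAtMost_imp_continuous_on)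
next
  fix t assume "a < t" "t < b"
  then show "\<exists>y. DERIV f t :> y \<and> 0 < y"
    using assms(2)[of t] assms(3)[of t] by auto
qed

lemma less_of_deriv_neg:
  fixes f f' :: "real \<Rightarrow> real"
  assumes "a < b" and "\<And>t. a \<le> t \<Longrightarrow> t \<le> b \<Longrightarrow> DERIV f t :> f' t"
    and "\<And>t. a < t \<Longrightarrow> t < b \<Longrightarrow> f' t < 0"
  shows "f b < f a"
proof (rule DERIV_neg_imp_decreasing_open[OF assms(1)])
  show "continuous_on {a..b} f"
    using assms(2) by (blast intro: DERIV_atLeastAtMost_imp_continuous_on)
next
  fix t assume "a < t" "t < b"
  then show "\<exists>y. DERIV f t :> y \<and> y < 0"
    using assms(2)[of t] assms(3)[of t] by auto
qed

lemma critical_point_strict_min: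
  fixes f f' f'' :: "real \<Rightarrow> real"
  assumes f: "\<And>t. a < t \<Longrightarrow> t < b \<Longrightarrow> DERIV f t :> f' t"
    and f': "\<And>t. a < t \<Longrightarrow> t < b \<Longrightarrow> DERIV f' t :> f'' t"
    and f'': "\<And>t. a < t \<Longrightarrow> t < b \<Longrightarrow> t \<noteq> x \<Longrightarrow> f'' t > 0"
    and x: "a < x" "x < b" "f' x = 0"
    and c: "a < c" "c < b" "c \<noteq> x"
  shows "f x < f c"
proof (cases "x < c")
  case True
  have "f' t > 0" if "x < t" "t < b" for t
    using less_of_deriv_pos[of x t f' f''] f' f'' x that by force
  then show ?thesis
    using less_of_deriv_pos[OF True, of f f'] f x c by force
next
  case False
  then have "c < x" using c by simp
  have "f' t < 0" if "a < t" "t < x" for t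
    using less_of_deriv_pos[of t x f' f''] f' f'' x that by force
  then show ?thesis
    using less_of_deriv_neg[OF \<open>c < x\<close>, of f f'] f x c by force
qed

lemma neg_ln_one_minus_gt:
  fixes y :: real
  assumes "0 < y" "y < 1"
  shows "3*y/(2*(2-y)) < - ln (1-y)"
proof -
  let ?f = "\<lambda>y::real. - ln (1-y) - 3*y/(2*(2-y))"
  have "?f 0 < ?f y"
  proof (rule less_of_deriv_pos[OF assms(1)])
    fix t :: real assume t: "0 \<le> t" "t \<le> y"
    then have t2: "2 - t \<noteq> 0" "1 - t \<noteq> 0" using assms by auto
    show "DERIV ?f t :> 1/(1-t) - 3/(2-t)^2"
      apply (rule DERIV_cong)
      using t2 t assms apply (auto intro!: derivative_eq_intros)[1]
      using t2 by (simp add: divide_simps power2_eq_square) (simp add: algebra_simps)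
  next
    fix t :: real assume t: "0 < t" "t < y"
    have "3*(1-t) < (2-t)^2"
      by (simp add: power2_eq_square algebra_simps, use mult_nonneg_nonneg[of t t] t assms in linarith)
    then show "1/(1-t) - 3/(2-t)^2 > 0" using t assms by (simp add: field_simps)
  qed
  then show ?thesis by simp
qed

lemma cube_am_gm_strict:
  fixes a b c :: real
  assumes "a \<ge> 0" "b \<ge> 0" "c \<ge> 0" "a \<noteq> b"
  shows "27*a*b*c < (a+b+c)^3"
proof -
  have id: "2*((a+b+c)^3 - 27*a*b*c)
      = (a+b+c)*((a-b)^2+(b-c)^2+(c-a)^2) + 6*(a*(b-c)^2+b*(c-a)^2+c*(a-b)^2)"
    by (simp add: power2_eq_square power3_eq_cube algebra_simps)
  have "(a-b)^2 > 0" using assms by simp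
  then have "(a-b)^2+(b-c)^2+(c-a)^2 > 0" by (smt (verit) zero_le_power2)
  moreover have "a+b+c > 0" using assms by linarith
  ultimately have "(a+b+c)*((a-b)^2+(b-c)^2+(c-a)^2) > 0" by simp
  moreover have "a*(b-c)^2+b*(c-a)^2+c*(a-b)^2 \<ge> 0" using assms by simp
  ultimately have "2*((a+b+c)^3 - 27*a*b*c) > 0" unfolding id by (intro add_pos_nonneg) auto
  then show ?thesis by simp
qed

text \<open>\<open>binary_kl c x\<close> is the divergence of \<open>(c, 1-c)\<close> from \<open>(x, 1-x)\<close>, and
  \<open>prior_div p0 p1 t\<close> below that of the posterior \<open>(t, 1-t)\<close> from the prior \<open>(p0, p1)\<close>;
  since \<open>ln 0 = 0\<close>, the terms \<open>0 * ln 0\<close> vanish.\<close>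

definition binary_kl :: "real \<Rightarrow> real \<Rightarrow> real" where
  "binary_kl c x = c*ln c - c*ln x + (1-c)*ln(1-c) - (1-c)*ln(1-x)"

lemma binary_kl_gt_interior:
  fixes x c :: real
  assumes x: "0 < x" "x < 1" and c: "0 < c" "c < 1" "c \<noteq> x"
  shows "3*(c-x)^2/(2*(3*x*(1-x) + (1-2*x)*(c-x))) < binary_kl c x"
proof -
  define S where "S c = 3*x*(1-x) + (1-2*x)*(c-x)" for c
  have Seq: "S c = x*(1-c) + c*(1-x) + x*(1-x)" for c unfolding S_def by (simp add: algebra_simps)
  have Spos: "S t \<noteq> 0" if "0 < t" "t < 1" for t
    unfolding Seq using that x by (smt (verit) mult_pos_pos)
  define h where "h c = binary_kl c x - 3*(c-x)^2/(2*S c)" for c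
  define h1 where "h1 c = ln c - ln x - ln (1-c) + ln (1-x)
      - 3*(c-x)*(2*S c - (1-2*x)*(c-x))/(2*(S c)^2)" for c
  define h2 where "h2 c = 1/c + 1/(1-c) - 27*(x*(1-x))^2/(S c)^3" for c
  have "h x < h c"
  proof (rule critical_point_strict_min[of 0 1 h h1 h2])
    fix t :: real assume t: "0 < t" "t < 1"
    show "DERIV h t :> h1 t" unfolding h_def h1_def binary_kl_def
      apply (rule DERIV_cong)
      using t x Spos[OF t] apply (auto intro!: derivative_eq_intros simp: S_def)[1]
      using t x Spos[OF t] by (simp add: divide_simps power2_eq_square S_def) (simp add: algebra_simps)
    show "DERIV h1 t :> h2 t" unfolding h1_def h2_def
      apply (rule DERIV_cong)
      using t x Spos[OF t] apply (auto intro!: derivative_eq_intros simp: S_def)[1]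
      using t x Spos[OF t] by (simp add: divide_simps power2_eq_square power3_eq_cube S_def)
        (simp add: algebra_simps)
  next
    fix t :: real assume t: "0 < t" "t < 1" "t \<noteq> x"
    have "27*(x*(1-t))*(t*(1-x))*(x*(1-x)) < (x*(1-t) + t*(1-x) + x*(1-x))^3"
      by (rule cube_am_gm_strict) (use t x in \<open>auto simp: algebra_simps\<close>)
    then have "27*(x*(1-x))^2*(t*(1-t)) < (S t)^3"
      unfolding Seq by (simp add: power2_eq_square algebra_simps)
    moreover have "S t > 0" unfolding Seq using t x by (smt (verit) mult_pos_pos)
    ultimately have "27*(x*(1-x))^2/(S t)^3 < 1/(t*(1-t))" using t by (simp add: divide_simps)
    moreover have "1/t + 1/(1-t) = 1/(t*(1-t))" using t by (simp add: divide_simps)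
    ultimately show "h2 t > 0" unfolding h2_def by linarith
  qed (use x c in \<open>auto simp: h1_def\<close>)
  moreover have "h x = 0" unfolding h_def binary_kl_def by simp
  ultimately show ?thesis unfolding h_def S_def by simp
qed

lemma binary_kl_gt:
  fixes x c :: real
  assumes x: "0 < x" "x < 1" and c: "0 \<le> c" "c \<le> 1" "c \<noteq> x"
  shows "(c-x)^2 < binary_kl c x * (2*x*(1-x) + 2/3*(1-2*x)*(c-x))"
proof -
  have Seq: "3*x*(1-x) + (1-2*x)*(c-x) = x*(1-c) + c*(1-x) + x*(1-x)"
    by (simp add: algebra_simps)
  have Spos: "3*x*(1-x) + (1-2*x)*(c-x) > 0"
    unfolding Seq using c x by (intro add_nonneg_pos) (auto intro!: mult_pos_pos)
  have "3*(c-x)^2/(2*(3*x*(1-x) + (1-2*x)*(c-x))) < binary_kl c x"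
  proof -
    consider "c = 0" | "c = 1" | "0 < c \<and> c < 1" using c by linarith
    then show ?thesis
    proof cases
      case 1
      have "3*(c-x)^2/(2*(3*x*(1-x) + (1-2*x)*(c-x))) = 3*x/(2*(2-x))"
        using 1 x by (simp add: divide_simps power2_eq_square) (simp add: algebra_simps)
      then show ?thesis using 1 neg_ln_one_minus_gt[OF x] by (simp add: binary_kl_def)
    next
      case 2
      have "x*x < x*1" using x by (intro mult_strict_left_mono) auto
      then have "x*x < 1" using x by linarith
      then have "3*(c-x)^2/(2*(3*x*(1-x) + (1-2*x)*(c-x))) = 3*(1-x)/(2*(2-(1-x)))"
        using 2 x by (simp add: divide_simps power2_eq_square) (simp add: algebra_simps)
      then show ?thesis using 2 x neg_ln_one_minus_gt[of "1-x"] by (simp add: binary_kl_def)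
    next
      case 3
      then show ?thesis using binary_kl_gt_interior[OF x] c by auto
    qed
  qed
  then show ?thesis using Spos by (simp add: field_simps)
qed

lemma binary_kl_weight_pos:
  fixes x c :: real
  assumes x: "0 < x" "x < 1" and c: "0 \<le> c" "c \<le> 1"
  shows "2*x*(1-x) + 2/3*(1-2*x)*(c-x) > 0"
proof -
  have "2*x*(1-x) + 2/3*(1-2*x)*(c-x) = 2/3*(x*(1-c) + c*(1-x) + x*(1-x))"
    by (simp add: field_simps)
  moreover have "x*(1-c) + c*(1-x) + x*(1-x) > 0"
    using c x by (intro add_nonneg_pos) (auto intro!: mult_pos_pos)
  ultimately show ?thesis by simp
qed

lemma binary_kl_pos:
  fixes x c :: real
  assumes x: "0 < x" "x < 1" and c: "0 \<le> c" "c \<le> 1" "c \<noteq> x"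
  shows "binary_kl c x > 0"
proof (rule ccontr)
  assume "\<not> binary_kl c x > 0"
  then have "binary_kl c x * (2*x*(1-x) + 2/3*(1-2*x)*(c-x)) \<le> 0"
    using binary_kl_weight_pos[OF x c(1,2)] by (simp add: mult_nonpos_nonneg)
  moreover have "(c-x)^2 > 0" using c by simp
  ultimately show False using binary_kl_gt[OF x c] by linarith
qed

section \<open>Chords of the divergence from the prior\<close>

definition prior_div :: "real \<Rightarrow> real \<Rightarrow> real \<Rightarrow> real" where
  "prior_div p0 p1 t = t * ln (t/p0) + (1-t) * ln ((1-t)/p1)"

lemma prior_div_deriv:
  fixes x :: real
  assumes "0 < p0" "0 < p1" "0 < x" "x < 1"
  shows "(prior_div p0 p1 has_real_derivative (ln (x/p0) - ln ((1-x)/p1))) (at x within s)"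
proof -
  have "DERIV (prior_div p0 p1) x :> ln (x/p0) - ln ((1-x)/p1)"
    unfolding prior_div_def
    apply (rule DERIV_cong)
    using assms apply (auto intro!: derivative_eq_intros)[1]
    using assms by (simp add: divide_simps)
  then show ?thesis by (rule has_field_derivative_at_within)
qed

lemma prior_div_bregman:
  fixes x c :: real
  assumes p: "0 < p0" "0 < p1" and x: "0 < x" "x < 1" and c: "0 \<le> c" "c \<le> 1"
  shows "prior_div p0 p1 c - prior_div p0 p1 x - (ln (x/p0) - ln ((1-x)/p1)) * (c - x)
    = binary_kl c x"
proof -
  have l1: "c * ln (c/p0) = c * ln c - c * ln p0"
    using p c by (cases "c = 0") (auto simp: ln_div right_diff_distrib)
  have l2: "(1-c) * ln ((1-c)/p1) = (1-c) * ln (1-c) - (1-c) * ln p1"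
    using p c by (cases "c = 1") (auto simp: ln_div right_diff_distrib)
  have l3: "ln (x/p0) = ln x - ln p0" "ln ((1-x)/p1) = ln (1-x) - ln p1"
    using p x by (auto simp: ln_div)
  show ?thesis unfolding prior_div_def binary_kl_def l1 l2 l3 by (simp add: algebra_simps)
qed

lemma prior_div_strictly_convex:
  fixes a m b :: real
  assumes p: "0 < p0" "0 < p1" and o: "a < m" "m < b" "0 \<le> a" "b \<le> 1"
  shows "(b-a) * prior_div p0 p1 m < (b-m) * prior_div p0 p1 a + (m-a) * prior_div p0 p1 b"
proof -
  define D where "D = ln (m/p0) - ln ((1-m)/p1)"
  have m: "0 < m" "m < 1" using o by auto
  have ea: "prior_div p0 p1 a = prior_div p0 p1 m + D*(a-m) + binary_kl a m"
    using prior_div_bregman[OF p m, of a] o unfolding D_def by simp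
  have eb: "prior_div p0 p1 b = prior_div p0 p1 m + D*(b-m) + binary_kl b m"
    using prior_div_bregman[OF p m, of b] o unfolding D_def by simp
  have "(b-m) * binary_kl a m > 0" "(m-a) * binary_kl b m > 0"
    using binary_kl_pos[OF m, of a] binary_kl_pos[OF m, of b] o by auto
  then show ?thesis unfolding ea eb by (simp add: algebra_simps)
qed

definition chord :: "real \<Rightarrow> real \<Rightarrow> real \<Rightarrow> real \<Rightarrow> real \<Rightarrow> real" where
  "chord p0 p1 c m x = ((c-m) * prior_div p0 p1 x + (m-x) * prior_div p0 p1 c) / (c-x)"

lemma chord_deriv:
  fixes x c m :: real
  assumes p: "0 < p0" "0 < p1" and x: "0 < x" "x < 1" and c: "0 \<le> c" "c \<le> 1" "c \<noteq> x"
  shows "DERIV (chord p0 p1 c m) x :> (m-c) * binary_kl c x / (c-x)^2"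
proof -
  have cx: "c - x \<noteq> 0" using c by simp
  have "DERIV (chord p0 p1 c m) x :>
      (((c-m) * (ln (x/p0) - ln ((1-x)/p1)) - prior_div p0 p1 c) * (c-x)
        - ((c-m) * prior_div p0 p1 x + (m-x) * prior_div p0 p1 c) * (-1)) / ((c-x)*(c-x))"
    unfolding chord_def
    by (rule DERIV_divide) (auto intro!: derivative_eq_intros prior_div_deriv simp: p x cx c)
  then show ?thesis
    apply (rule DERIV_cong)
    unfolding prior_div_bregman[OF p x c(1,2), symmetric] using cx
    by (simp add: power2_eq_square divide_simps) (simp add: algebra_simps)
qed

lemma chord_decreasing_below:
  fixes x1 x2 m c :: real
  assumes p: "0 < p0" "0 < p1" and o: "x1 < x2" "x2 < m" "m < c" "0 \<le> x1" "c \<le> 1"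
  shows "chord p0 p1 c m x2 < chord p0 p1 c m x1"
proof -
  have "(c-x1) * prior_div p0 p1 x2 < (c-x2) * prior_div p0 p1 x1 + (x2-x1) * prior_div p0 p1 c"
    by (rule prior_div_strictly_convex[OF p]) (use o in auto)
  then have "(c-m) * ((c-x1) * prior_div p0 p1 x2)
      < (c-m) * ((c-x2) * prior_div p0 p1 x1 + (x2-x1) * prior_div p0 p1 c)"
    using o by (intro mult_strict_left_mono) auto
  then have "(c-x1) * ((c-m) * prior_div p0 p1 x2 + (m-x2) * prior_div p0 p1 c)
      < (c-x2) * ((c-m) * prior_div p0 p1 x1 + (m-x1) * prior_div p0 p1 c)"
    by (simp add: algebra_simps)
  then show ?thesis unfolding chord_def using o by (simp add: divide_simps mult.commute)
qed

text \<open>\<open>kl_factor x = (x*(1-x)) powr (2/3)\<close> is the integrating factor that makes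
  \<open>binary_kl c x / (c-x)^2\<close> strictly monotone in \<open>x\<close> on either side of \<open>c\<close>;
  the sign of the derivative is exactly the inequality \<open>binary_kl_gt\<close>.\<close>

definition kl_factor :: "real \<Rightarrow> real" where
  "kl_factor x = exp ((2/3) * (ln x + ln (1-x)))"

definition scaled_kl :: "real \<Rightarrow> real \<Rightarrow> real" where
  "scaled_kl c x = kl_factor x * binary_kl c x / (c-x)^2"

lemma scaled_kl_deriv:
  fixes x c :: real
  assumes x: "0 < x" "x < 1" and c: "c \<noteq> x"
  shows "DERIV (scaled_kl c) x :> kl_factor x *
    (binary_kl c x * (2*x*(1-x) + 2/3*(1-2*x)*(c-x)) - (c-x)^2) / (x*(1-x)*(c-x)^3)"
proof -
  have cx: "c - x \<noteq> 0" "1 - x \<noteq> 0" using c x by auto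
  show ?thesis unfolding scaled_kl_def kl_factor_def binary_kl_def
    apply (rule DERIV_cong)
    using x cx apply (auto intro!: derivative_eq_intros)[1]
    using x cx by (simp add: power2_eq_square power3_eq_cube divide_simps) (simp add: algebra_simps)
qed

lemma kl_factor_pos: "kl_factor x > 0"
  unfolding kl_factor_def by simp

lemma scaled_kl_deriv_sign:
  fixes x c m :: real
  assumes x: "0 < x" "x < 1" and c: "0 \<le> c" "c \<le> 1" and mc: "(m-c) * (x-c) > 0"
  shows "(m-c) * (kl_factor x * (binary_kl c x * (2*x*(1-x) + 2/3*(1-2*x)*(c-x)) - (c-x)^2)
    / (x*(1-x)*(c-x)^3)) < 0"
proof -
  have cx: "c \<noteq> x" using mc by auto
  have P: "kl_factor x * (binary_kl c x * (2*x*(1-x) + 2/3*(1-2*x)*(c-x)) - (c-x)^2) / (x*(1-x)) > 0"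
    using binary_kl_gt[OF x c cx] x kl_factor_pos[of x] by simp
  have N: "(m-c) / (c-x)^3 < 0"
  proof -
    have "(m-c) * (c-x) < 0" using mc by (simp add: algebra_simps)
    then have "(m-c) * (c-x) * (c-x)^2 < 0" using cx by (simp add: mult_neg_pos)
    then have "(m-c) * (c-x)^3 < 0" by (simp add: power2_eq_square power3_eq_cube mult.assoc)
    then show ?thesis by (simp add: divide_less_0_iff mult_less_0_iff)
  qed
  have E: "(m-c) * (kl_factor x * (binary_kl c x * (2*x*(1-x) + 2/3*(1-2*x)*(c-x)) - (c-x)^2)
      / (x*(1-x)*(c-x)^3))
    = (kl_factor x * (binary_kl c x * (2*x*(1-x) + 2/3*(1-2*x)*(c-x)) - (c-x)^2) / (x*(1-x)))
      * ((m-c) / (c-x)^3)"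
    by (simp add: field_simps)
  show ?thesis by (subst E) (rule mult_pos_neg[OF P N])
qed

lemma chord_reflect:
  "chord p1 p0 (1-c) (1-m) (1-x) = chord p0 p1 c m x"
proof -
  have "prior_div p1 p0 (1-t) = prior_div p0 p1 t" for t
    unfolding prior_div_def by simp
  moreover have "((1-c)-(1-m)) * a + ((1-m)-(1-x)) * b = - ((c-m) * a + (m-x) * b)"
    "(1-c)-(1-x) = - (c-x)" for a b :: real
    by (simp_all add: algebra_simps)
  ultimately show ?thesis unfolding chord_def by (simp only: minus_divide_divide)
qed

lemma chord_sum_descent_below:
  fixes I :: "'b set" and M c mu :: "'b \<Rightarrow> real"
  assumes p: "0 < p0" "0 < p1" and fin: "finite I" and ne: "I \<noteq> {}"
    and M: "\<forall>i\<in>I. M i > 0" and c: "\<forall>i\<in>I. c i \<le> 1" and u0: "0 \<le> u0"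
    and side: "\<forall>i\<in>I. u0 < mu i \<and> mu i < c i"
  shows "\<exists>x. 0 \<le> x \<and> x \<le> 1 \<and> (\<forall>i\<in>I. (x - mu i) * (c i - mu i) < 0) \<and>
    (\<Sum>i\<in>I. M i * chord p0 p1 (c i) (mu i) x) < (\<Sum>i\<in>I. M i * chord p0 p1 (c i) (mu i) u0)"
proof -
  define x where "x = (u0 + Min (mu ` I)) / 2"
  have "Min (mu ` I) \<in> mu ` I" using fin ne by simp
  then have "u0 < Min (mu ` I)" using side by auto
  moreover have "Min (mu ` I) \<le> mu i" if "i \<in> I" for i using fin that by simp
  ultimately have xi: "u0 < x \<and> x < mu i" if "i \<in> I" for i
    using that unfolding x_def by force
  have "(\<Sum>i\<in>I. M i * chord p0 p1 (c i) (mu i) x) < (\<Sum>i\<in>I. M i * chord p0 p1 (c i) (mu i) u0)"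
    using fin ne
  proof (rule sum_strict_mono)
    fix i assume "i \<in> I"
    then show "M i * chord p0 p1 (c i) (mu i) x < M i * chord p0 p1 (c i) (mu i) u0"
      using xi side M c u0 chord_decreasing_below[OF p] by (simp add: mult_strict_left_mono)
  qed
  moreover have "0 \<le> x" "x \<le> 1" using xi side c u0 ne by fastforce+
  moreover have "\<forall>i\<in>I. (x - mu i) * (c i - mu i) < 0"
    using xi side by (auto simp: mult_neg_pos)
  ultimately show ?thesis by blast
qed

lemma chord_sum_descent_above:
  fixes I :: "'b set" and M c mu :: "'b \<Rightarrow> real"
  assumes p: "0 < p0" "0 < p1" and fin: "finite I" and ne: "I \<noteq> {}"
    and M: "\<forall>i\<in>I. M i > 0" and c: "\<forall>i\<in>I. 0 \<le> c i" and u0: "u0 \<le> 1"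
    and side: "\<forall>i\<in>I. c i < mu i \<and> mu i < u0"
  shows "\<exists>x. 0 \<le> x \<and> x \<le> 1 \<and> (\<forall>i\<in>I. (x - mu i) * (c i - mu i) < 0) \<and>
    (\<Sum>i\<in>I. M i * chord p0 p1 (c i) (mu i) x) < (\<Sum>i\<in>I. M i * chord p0 p1 (c i) (mu i) u0)"
proof -
  obtain x where x: "0 \<le> x" "x \<le> 1" "\<forall>i\<in>I. (x - (1 - mu i)) * ((1 - c i) - (1 - mu i)) < 0"
    and less: "(\<Sum>i\<in>I. M i * chord p1 p0 (1 - c i) (1 - mu i) x)
      < (\<Sum>i\<in>I. M i * chord p1 p0 (1 - c i) (1 - mu i) (1 - u0))"
    using chord_sum_descent_below[of p1 p0 I M "\<lambda>i. 1 - c i" "1 - u0" "\<lambda>i. 1 - mu i"] assms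
    by auto
  have "\<forall>i\<in>I. ((1 - x) - mu i) * (c i - mu i) < 0"
    using x(3) by (simp add: algebra_simps)
  moreover have "(\<Sum>i\<in>I. M i * chord p0 p1 (c i) (mu i) (1 - x))
      < (\<Sum>i\<in>I. M i * chord p0 p1 (c i) (mu i) u0)"
    using less chord_reflect[of p1 p0 _ _ "1 - x", simplified] chord_reflect[of p1 p0 _ _ u0]
    by simp
  ultimately show ?thesis using x(1,2) by (intro exI[of _ "1 - x"]) auto
qed

lemma scaled_chord_sum_deriv_decreasing:
  fixes I :: "'b set" and M c mu :: "'b \<Rightarrow> real"
  assumes fin: "finite I" and ne: "I \<noteq> {}"
    and M: "\<forall>i\<in>I. M i > 0" and c: "\<forall>i\<in>I. 0 \<le> c i \<and> c i \<le> 1"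
    and J: "0 \<le> lo" "hi \<le> 1" "lo < a" "a < b" "b < hi"
    and side: "\<And>x i. lo < x \<Longrightarrow> x < hi \<Longrightarrow> i \<in> I \<Longrightarrow> (mu i - c i) * (x - c i) > 0"
  shows "kl_factor b * (\<Sum>i\<in>I. M i * ((mu i - c i) * binary_kl (c i) b / (c i - b)^2))
    < kl_factor a * (\<Sum>i\<in>I. M i * ((mu i - c i) * binary_kl (c i) a / (c i - a)^2))"
proof -
  define psi where "psi x = (\<Sum>i\<in>I. M i * ((mu i - c i) * scaled_kl (c i) x))" for x
  define psi' where "psi' x = (\<Sum>i\<in>I. M i * ((mu i - c i) * (kl_factor x *
      (binary_kl (c i) x * (2*x*(1-x) + 2/3*(1-2*x)*(c i-x)) - (c i-x)^2) / (x*(1-x)*(c i-x)^3))))"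
    for x
  have x01: "0 < x" "x < 1" if "lo < x" "x < hi" for x using that J by auto
  have "DERIV psi x :> psi' x" if "a \<le> x" "x \<le> b" for x
  proof -
    have "lo < x" "x < hi" using that J by auto
    then show ?thesis unfolding psi_def psi'_def
      by (intro DERIV_sum DERIV_cmult scaled_kl_deriv[OF x01]) (use side in force)+
  qed
  moreover have "psi' x < 0" if "a < x" "x < b" for x
  proof -
    have x: "lo < x" "x < hi" using that J by auto
    have "psi' x < (\<Sum>i\<in>I. 0)" unfolding psi'_def
      using fin ne
    proof (rule sum_strict_mono)
      fix i assume i: "i \<in> I"
      show "M i * ((mu i - c i) * (kl_factor x *
          (binary_kl (c i) x * (2*x*(1-x) + 2/3*(1-2*x)*(c i-x)) - (c i-x)^2)
          / (x*(1-x)*(c i-x)^3))) < 0"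
        by (rule mult_pos_neg, use M i in simp, rule scaled_kl_deriv_sign[OF x01[OF x]])
           (use c i side[OF x i] in auto)
    qed
    then show ?thesis by simp
  qed
  ultimately have "psi b < psi a" by (rule less_of_deriv_neg[OF J(4)])
  moreover have "psi x = kl_factor x * (\<Sum>i\<in>I. M i * ((mu i - c i) * binary_kl (c i) x / (c i - x)^2))"
    for x
    unfolding psi_def scaled_kl_def sum_distrib_left by (rule sum.cong) (auto simp: algebra_simps)
  ultimately show ?thesis by simp
qed

text \<open>Hence the sum of chord values has no local minimum: its derivative, scaled by the positive
  \<open>kl_factor\<close>, changes sign at most once, from positive to negative.\<close>

lemma chord_sum_no_local_min:
  fixes I :: "'b set" and M c mu :: "'b \<Rightarrow> real"
  assumes p: "0 < p0" "0 < p1" and fin: "finite I" and ne: "I \<noteq> {}"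
    and M: "\<forall>i\<in>I. M i > 0" and c: "\<forall>i\<in>I. 0 \<le> c i \<and> c i \<le> 1"
    and J: "0 \<le> lo" "hi \<le> 1" "lo < u0" "u0 < hi"
    and side: "\<And>x i. lo < x \<Longrightarrow> x < hi \<Longrightarrow> i \<in> I \<Longrightarrow> (mu i - c i) * (x - c i) > 0"
  shows "\<exists>x. lo < x \<and> x < hi \<and>
    (\<Sum>i\<in>I. M i * chord p0 p1 (c i) (mu i) x) < (\<Sum>i\<in>I. M i * chord p0 p1 (c i) (mu i) u0)"
proof -
  define F where "F x = (\<Sum>i\<in>I. M i * chord p0 p1 (c i) (mu i) x)" for x
  define F' where "F' x = (\<Sum>i\<in>I. M i * ((mu i - c i) * binary_kl (c i) x / (c i - x)^2))" for x
  have dF: "DERIV F x :> F' x" if "lo < x" "x < hi" for x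
  proof -
    have "0 < x" "x < 1" using that J by auto
    then show ?thesis unfolding F_def F'_def
      by (intro DERIV_sum DERIV_cmult chord_deriv[OF p]) (use c side[OF that] in force)+
  qed
  have decreasing: "kl_factor b * F' b < kl_factor a * F' a" if "lo < a" "a < b" "b < hi" for a b
    unfolding F'_def using scaled_chord_sum_deriv_decreasing[OF fin ne M c J(1,2) that side] .
  show ?thesis
  proof (cases "F' u0 \<le> 0")
    case True
    define x where "x = (u0 + hi) / 2"
    have x: "u0 < x" "x < hi" using J unfolding x_def by auto
    have "F x < F u0"
    proof (rule less_of_deriv_neg[OF x(1)])
      show "DERIV F t :> F' t" if "u0 \<le> t" "t \<le> x" for t using dF that x J by simp
      fix t assume t: "u0 < t" "t < x"
      then have "kl_factor t * F' t < 0"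
        using decreasing[of u0 t] True kl_factor_pos[of u0] x J by (smt (verit) mult_nonneg_nonpos)
      then show "F' t < 0" using kl_factor_pos[of t] by (simp add: mult_less_0_iff)
    qed
    then show ?thesis unfolding F_def using x J by (intro exI[of _ x]) auto
  next
    case False
    define x where "x = (u0 + lo) / 2"
    have x: "x < u0" "lo < x" using J unfolding x_def by auto
    have "F x < F u0"
    proof (rule less_of_deriv_pos[OF x(1)])
      show "DERIV F t :> F' t" if "x \<le> t" "t \<le> u0" for t using dF that x J by simp
      fix t assume t: "x < t" "t < u0"
      then have "kl_factor t * F' t > 0"
        using decreasing[of t u0] False kl_factor_pos[of u0] x J by (smt (verit) mult_pos_pos)
      then show "F' t > 0" using kl_factor_pos[of t] by (simp add: zero_less_mult_iff)
    qed
    then show ?thesis unfolding F_def using x J by (intro exI[of _ x]) auto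
  qed
qed

lemma chord_sum_descent:
  fixes I :: "'b set" and M c mu :: "'b \<Rightarrow> real"
  assumes p: "0 < p0" "0 < p1" and fin: "finite I" and ne: "I \<noteq> {}"
    and u0: "0 \<le> u0" "u0 \<le> 1"
    and M: "\<forall>i\<in>I. M i > 0" and c: "\<forall>i\<in>I. 0 \<le> c i \<and> c i \<le> 1"
    and mu: "\<forall>i\<in>I. (mu i - u0) * (c i - mu i) > 0"
  shows "\<exists>x. 0 \<le> x \<and> x \<le> 1 \<and> (\<forall>i\<in>I. (x - mu i) * (c i - mu i) < 0) \<and>
    (\<Sum>i\<in>I. M i * chord p0 p1 (c i) (mu i) x) < (\<Sum>i\<in>I. M i * chord p0 p1 (c i) (mu i) u0)"
proof -
  define Rt where "Rt = {i\<in>I. u0 < c i}"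
  define Lf where "Lf = {i\<in>I. c i < u0}"
  have sR: "u0 < mu i \<and> mu i < c i" if "i \<in> Rt" for i
    using mu that unfolding Rt_def by (auto simp: zero_less_mult_iff)
  have sL: "c i < mu i \<and> mu i < u0" if "i \<in> Lf" for i
    using mu that unfolding Lf_def by (auto simp: zero_less_mult_iff)
  have I: "I = Rt \<union> Lf" "Rt \<subseteq> I" "Lf \<subseteq> I"
    using mu unfolding Rt_def Lf_def by (fastforce simp: zero_less_mult_iff)+
  have fin': "finite Rt" "finite Lf" using fin I by (auto intro: finite_subset)
  consider "Lf = {}" | "Rt = {}" | "Lf \<noteq> {}" "Rt \<noteq> {}" by blast
  then show ?thesis
  proof cases
    case 1
    then show ?thesis using chord_sum_descent_below[OF p fin ne M _ u0(1)] c sR I by auto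
  next
    case 2
    then show ?thesis using chord_sum_descent_above[OF p fin ne M _ u0(2)] c sL I by auto
  next
    case 3
    define lo where "lo = Max (mu ` Lf)"
    define hi where "hi = Min (mu ` Rt)"
    have lo: "mu i \<le> lo" if "i \<in> Lf" for i unfolding lo_def using fin' that by auto
    have hi: "hi \<le> mu i" if "i \<in> Rt" for i unfolding hi_def using fin' that by auto
    obtain il where il: "il \<in> Lf" "lo = mu il" unfolding lo_def using fin' 3 Max_in by blast
    obtain ir where ir: "ir \<in> Rt" "hi = mu ir" unfolding hi_def using fin' 3 Min_in by blast
    have J: "0 \<le> lo" "hi \<le> 1" "lo < u0" "u0 < hi"
      using sL[OF il(1)] sR[OF ir(1)] c I il ir by force+
    have between: "(mu i - c i) * (x - c i) > 0 \<and> (x - mu i) * (c i - mu i) < 0"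
      if "lo < x" "x < hi" "i \<in> I" for x i
    proof -
      have "i \<in> Lf \<or> i \<in> Rt" using I that by auto
      then show ?thesis
      proof
        assume "i \<in> Lf"
        then have "c i < mu i" "mu i < x" using sL lo that by force+
        then show ?thesis by (auto simp: mult_pos_neg)
      next
        assume "i \<in> Rt"
        then have "mu i < c i" "x < mu i" using sR hi that by force+
        then show ?thesis by (auto simp: mult_neg_pos mult_neg_neg)
      qed
    qed
    obtain x where "lo < x" "x < hi"
      "(\<Sum>i\<in>I. M i * chord p0 p1 (c i) (mu i) x) < (\<Sum>i\<in>I. M i * chord p0 p1 (c i) (mu i) u0)"
      using chord_sum_no_local_min[OF p fin ne M c J] between by blast
    then show ?thesis using between J by (intro exI[of _ x]) auto
  qed
qed

section \<open>Optimal splits\<close>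

text \<open>Splitting the joint distribution \<open>f z y\<close> of \<open>(z, y)\<close> along posteriors \<open>u z\<close>:
  the mutual information of the upgraded channel is \<open>split_cost\<close>, and every competitor \<open>(g, t)\<close>
  with the same column masses and column first moments is realised by a channel.\<close>

definition split_cost ::
  "real \<Rightarrow> real \<Rightarrow> 'z set \<Rightarrow> 'y set \<Rightarrow> ('z \<Rightarrow> 'y \<Rightarrow> real) \<Rightarrow> ('z \<Rightarrow> real) \<Rightarrow> real" where
  "split_cost p0 p1 Z Y g t = (\<Sum>y\<in>Y. \<Sum>z\<in>Z. g z y * prior_div p0 p1 (t z))"

definition optimal_split ::
  "real \<Rightarrow> real \<Rightarrow> 'z set \<Rightarrow> 'y set \<Rightarrow> ('z \<Rightarrow> 'y \<Rightarrow> real) \<Rightarrow> ('z \<Rightarrow> real) \<Rightarrow> bool" where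
  "optimal_split p0 p1 Z Y f u \<longleftrightarrow> (\<forall>t g. (\<forall>z\<in>Z. 0 \<le> t z \<and> t z \<le> 1) \<longrightarrow>
     (\<forall>z\<in>Z. \<forall>y\<in>Y. 0 \<le> g z y) \<longrightarrow>
     (\<forall>y\<in>Y. (\<Sum>z\<in>Z. g z y) = (\<Sum>z\<in>Z. f z y) \<and> (\<Sum>z\<in>Z. g z y * t z) = (\<Sum>z\<in>Z. f z y * u z)) \<longrightarrow>
     split_cost p0 p1 Z Y f u \<le> split_cost p0 p1 Z Y g t)"

lemma optimal_split_column_perturbation:
  fixes D :: "'z \<Rightarrow> real"
  assumes opt: "optimal_split p0 p1 Z Y f u" and fin: "finite Y"
    and u: "\<forall>z\<in>Z. 0 \<le> u z \<and> u z \<le> 1" and f: "\<forall>z\<in>Z. \<forall>y\<in>Y. 0 \<le> f z y"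
    and y: "y \<in> Y" and D: "\<forall>z\<in>Z. 0 \<le> f z y + D z" "(\<Sum>z\<in>Z. D z) = 0" "(\<Sum>z\<in>Z. D z * u z) = 0"
  shows "0 \<le> (\<Sum>z\<in>Z. D z * prior_div p0 p1 (u z))"
proof -
  define g where "g z y' = f z y' + (if y' = y then D z else 0)" for z y'
  have "\<forall>z\<in>Z. \<forall>y'\<in>Y. 0 \<le> g z y'" using f D unfolding g_def by auto
  moreover have "\<forall>y'\<in>Y. (\<Sum>z\<in>Z. g z y') = (\<Sum>z\<in>Z. f z y') \<and>
      (\<Sum>z\<in>Z. g z y' * u z) = (\<Sum>z\<in>Z. f z y' * u z)"
  proof
    fix y' assume "y' \<in> Y"
    show "(\<Sum>z\<in>Z. g z y') = (\<Sum>z\<in>Z. f z y') \<and> (\<Sum>z\<in>Z. g z y' * u z) = (\<Sum>z\<in>Z. f z y' * u z)"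
      using D unfolding g_def by (cases "y' = y") (simp_all add: sum.distrib distrib_right)
  qed
  ultimately have "split_cost p0 p1 Z Y f u \<le> split_cost p0 p1 Z Y g u"
    using opt u unfolding optimal_split_def by blast
  also have "\<dots> = split_cost p0 p1 Z Y f u + (\<Sum>z\<in>Z. D z * prior_div p0 p1 (u z))"
  proof -
    have "split_cost p0 p1 Z Y g u = (\<Sum>y'\<in>Y. (\<Sum>z\<in>Z. f z y' * prior_div p0 p1 (u z))
        + (if y' = y then (\<Sum>z\<in>Z. D z * prior_div p0 p1 (u z)) else 0))"
      unfolding split_cost_def g_def by (rule sum.cong) (auto simp: distrib_right sum.distrib)
    then show ?thesis using fin y by (simp add: sum.distrib split_cost_def)
  qed
  finally show ?thesis by simp
qed

lemma optimal_split_no_point_between: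
  assumes p: "0 < p0" "0 < p1" and opt: "optimal_split p0 p1 Z Y f u"
    and fin: "finite Z" "finite Y"
    and u: "\<forall>z\<in>Z. 0 \<le> u z \<and> u z \<le> 1" and f: "\<forall>z\<in>Z. \<forall>y\<in>Y. 0 \<le> f z y"
    and y: "y \<in> Y" and z: "z1 \<in> Z" "z2 \<in> Z" "z3 \<in> Z" and fp: "f z1 y > 0" "f z3 y > 0"
  shows "\<not> (u z1 < u z2 \<and> u z2 < u z3)"
proof
  assume o: "u z1 < u z2 \<and> u z2 < u z3"
  define u1 u2 u3 where "u1 = u z1" and "u2 = u z2" and "u3 = u z3"
  have d: "z1 \<noteq> z2" "z1 \<noteq> z3" "z2 \<noteq> z3" using o by auto
  define \<alpha> where "\<alpha> = min (f z1 y) (f z3 y * (u3-u2) / (u2-u1))"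
  define \<gamma> where "\<gamma> = \<alpha> * (u3-u1) / (u3-u2)"
  define \<delta> where "\<delta> = \<alpha> * (u2-u1) / (u3-u2)"
  have \<alpha>: "0 < \<alpha>" "\<alpha> \<le> f z1 y" "\<delta> \<le> f z3 y"
    using fp o unfolding \<alpha>_def \<delta>_def u1_def u2_def u3_def by (auto simp: field_simps min_def)
  have \<gamma>: "\<gamma> = \<alpha> + \<delta>" "\<gamma> * u2 = \<alpha> * u1 + \<delta> * u3" "0 \<le> \<gamma>"
    using o \<alpha> unfolding \<gamma>_def \<delta>_def u1_def u2_def u3_def by (simp_all add: field_simps)
  define D where "D z = (if z = z1 then - \<alpha> else 0) + (if z = z2 then \<gamma> else 0)
    + (if z = z3 then - \<delta> else 0)" for z
  have sum_D: "(\<Sum>z\<in>Z. D z * h z) = - \<alpha> * h z1 + \<gamma> * h z2 - \<delta> * h z3" for h :: "_ \<Rightarrow> real"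
    unfolding D_def using fin z
    by (simp add: distrib_right sum.distrib if_distrib[where f="\<lambda>a. a * _"] cong: if_cong)
  have "0 \<le> (\<Sum>z\<in>Z. D z * prior_div p0 p1 (u z))"
  proof (rule optimal_split_column_perturbation[OF opt fin(2) u f y])
    show "\<forall>z\<in>Z. 0 \<le> f z y + D z" using f y \<alpha> \<gamma> d unfolding D_def by auto
    show "(\<Sum>z\<in>Z. D z) = 0" "(\<Sum>z\<in>Z. D z * u z) = 0"
      using sum_D[of "\<lambda>_. 1"] sum_D[of u] \<gamma> unfolding u1_def u2_def u3_def by simp_all
  qed
  moreover have "\<gamma> * prior_div p0 p1 u2 < \<alpha> * prior_div p0 p1 u1 + \<delta> * prior_div p0 p1 u3"
  proof -
    have "(u3-u1) * prior_div p0 p1 u2 < (u3-u2) * prior_div p0 p1 u1 + (u2-u1) * prior_div p0 p1 u3"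
      by (rule prior_div_strictly_convex[OF p]) (use o u z in \<open>auto simp: u1_def u2_def u3_def\<close>)
    from mult_strict_left_mono[OF this, of "\<alpha> / (u3-u2)"] show ?thesis
      using \<alpha> o unfolding \<gamma>_def \<delta>_def u1_def u2_def u3_def by (simp add: field_simps)
  qed
  ultimately show False using sum_D[of "\<lambda>z. prior_div p0 p1 (u z)"]
    unfolding u1_def u2_def u3_def by simp
qed

lemma weighted_mean_opposite_side:
  fixes w u :: "'a \<Rightarrow> real"
  assumes fin: "finite Z" and w: "\<forall>a\<in>Z. 0 \<le> w a"
    and z: "z \<in> Z" "w z > 0" and mean: "(\<Sum>a\<in>Z. w a * u a) = (\<Sum>a\<in>Z. w a) * V"
    and ne: "u z \<noteq> V"
  shows "\<exists>a\<in>Z. w a > 0 \<and> (u a - V) * (u z - V) < 0"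
proof (rule ccontr)
  assume none: "\<not> ?thesis"
  have nonneg: "\<forall>a\<in>Z. 0 \<le> w a * ((u a - V) * (u z - V))"
  proof
    fix a assume a: "a \<in> Z"
    show "0 \<le> w a * ((u a - V) * (u z - V))"
    proof (cases "w a = 0")
      case False
      then have "w a > 0" using w a by force
      then show ?thesis using none a by (auto simp: not_less)
    qed simp
  qed
  have "(\<Sum>a\<in>Z. w a * ((u a - V) * (u z - V))) = (\<Sum>a\<in>Z. (w a * u a - w a * V) * (u z - V))"
    by (rule sum.cong) (simp_all add: algebra_simps)
  also have "\<dots> = ((\<Sum>a\<in>Z. w a * u a) - (\<Sum>a\<in>Z. w a) * V) * (u z - V)"
    by (simp add: sum_distrib_right[symmetric] sum_subtractf)
  also have "\<dots> = 0" using mean by simp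
  finally have "(\<Sum>a\<in>Z. w a * ((u a - V) * (u z - V))) = 0" .
  moreover have "(u z - V) * (u z - V) > 0" using ne by (simp flip: power2_eq_square)
  then have "w z * ((u z - V) * (u z - V)) > 0" using z by simp
  then have "(\<Sum>a\<in>Z. w a * ((u a - V) * (u z - V))) > 0"
    by (intro sum_pos2[OF fin z(1)]) (use nonneg in auto)
  ultimately show False by simp
qed

text \<open>The chord value at \<open>m\<close> is the cost of the unique split of mass \<open>M\<close> with mean \<open>m\<close>
  onto the abscissae \<open>x\<close> and \<open>c\<close>.\<close>

lemma chord_weights:
  fixes M m c x :: real
  assumes "c \<noteq> x"
  shows "M*(c-m)/(c-x) + M*(m-x)/(c-x) = M"
    and "M*(c-m)/(c-x) * x + M*(m-x)/(c-x) * c = M * m"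
    and "M * chord p0 p1 c m x = M*(c-m)/(c-x) * prior_div p0 p1 x + M*(m-x)/(c-x) * prior_div p0 p1 c"
proof -
  have "c - x \<noteq> 0" using assms by simp
  then show "M*(c-m)/(c-x) + M*(m-x)/(c-x) = M"
    and "M*(c-m)/(c-x) * x + M*(m-x)/(c-x) * c = M * m"
    and "M * chord p0 p1 c m x = M*(c-m)/(c-x) * prior_div p0 p1 x + M*(m-x)/(c-x) * prior_div p0 p1 c"
    unfolding chord_def by (simp_all add: divide_simps) (simp_all add: algebra_simps)
qed

lemma chord_weights_pos:
  fixes M m c x :: real
  assumes M: "M > 0" and m: "(x - m) * (c - m) < 0"
  shows "M*(c-m)/(c-x) > 0" "M*(m-x)/(c-x) > 0"
proof -
  have "(c-m)/(c-x) > 0 \<and> (m-x)/(c-x) > 0"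
  proof (cases "m < c")
    case True
    then have "x < m" using m by (simp add: mult_less_0_iff)
    then show ?thesis using True by simp
  next
    case False
    then have "m > c" using m by (cases "m = c") auto
    then have "x > m" using m by (simp add: mult_less_0_iff)
    then show ?thesis using \<open>m > c\<close> by (simp add: divide_neg_neg)
  qed
  then show "M*(c-m)/(c-x) > 0" "M*(m-x)/(c-x) > 0"
    using M by (simp_all add: times_divide_eq_right[symmetric] del: times_divide_eq_right)
qed

text \<open>The posterior of letter \<open>z\<close> moves to \<open>x\<close>; each column \<open>y\<close> using \<open>z\<close> redistributes
  the mass of \<open>z\<close> and of a partner \<open>c y\<close> as \<open>a y\<close>, \<open>b y\<close> so that its mass and mean are kept.\<close>

lemma optimal_split_relocate:
  fixes a b :: "'y \<Rightarrow> real" and c :: "'y \<Rightarrow> 'z"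
  assumes opt: "optimal_split p0 p1 Z Y f u" and fin: "finite Z" "finite Y"
    and u: "\<forall>z\<in>Z. 0 \<le> u z \<and> u z \<le> 1" and f: "\<forall>z\<in>Z. \<forall>y\<in>Y. 0 \<le> f z y"
    and z: "z \<in> Z" and x: "0 \<le> x" "x \<le> 1"
    and Yz: "Yz \<subseteq> Y" "\<forall>y\<in>Y - Yz. f z y = 0"
    and c: "\<forall>y\<in>Yz. c y \<in> Z \<and> c y \<noteq> z"
    and ab: "\<forall>y\<in>Yz. 0 \<le> a y \<and> 0 \<le> b y \<and> a y + b y = f z y + f (c y) y \<and>
               a y * x + b y * u (c y) = f z y * u z + f (c y) y * u (c y)"
  shows "(\<Sum>y\<in>Yz. f z y * prior_div p0 p1 (u z) + f (c y) y * prior_div p0 p1 (u (c y)))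
    \<le> (\<Sum>y\<in>Yz. a y * prior_div p0 p1 x + b y * prior_div p0 p1 (u (c y)))"
proof -
  define t where "t = u(z := x)"
  define g where "g a' y = (if y \<in> Yz then (if a' = z then a y else if a' = c y then b y else f a' y)
    else f a' y)" for a' y
  have col_in: "(\<Sum>a'\<in>Z. g a' y * h (t a')) = (\<Sum>a'\<in>Z. f a' y * h (u a'))
      + (a y * h x - f z y * h (u z)) + (b y - f (c y) y) * h (u (c y))"
    if y: "y \<in> Yz" for y and h :: "real \<Rightarrow> real"
  proof -
    have "g a' y * h (t a') = f a' y * h (u a')
        + (if a' = z then a y * h x - f z y * h (u z) else 0)
        + (if a' = c y then (b y - f (c y) y) * h (u (c y)) else 0)" for a'
      using y c unfolding g_def t_def by (auto simp: algebra_simps)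
    then show ?thesis using fin z c y by (simp add: sum.distrib)
  qed
  have col_out: "(\<Sum>a'\<in>Z. g a' y * h (t a')) = (\<Sum>a'\<in>Z. f a' y * h (u a'))"
    if y: "y \<in> Y" "y \<notin> Yz" for y and h :: "real \<Rightarrow> real"
  proof (rule sum.cong[OF refl])
    fix a' assume "a' \<in> Z"
    have "f z y = 0" using Yz(2) y by blast
    then show "g a' y * h (t a') = f a' y * h (u a')"
      using y unfolding g_def t_def by (cases "a' = z") simp_all
  qed
  have "0 \<le> a y" "0 \<le> b y" if "y \<in> Yz" for y using ab that by blast+
  then have "\<forall>a'\<in>Z. \<forall>y\<in>Y. 0 \<le> g a' y" using f unfolding g_def by simp
  moreover have "\<forall>a'\<in>Z. 0 \<le> t a' \<and> t a' \<le> 1" using u x unfolding t_def by auto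
  moreover have "\<forall>y\<in>Y. (\<Sum>a'\<in>Z. g a' y) = (\<Sum>a'\<in>Z. f a' y) \<and>
      (\<Sum>a'\<in>Z. g a' y * t a') = (\<Sum>a'\<in>Z. f a' y * u a')"
  proof
    fix y assume y: "y \<in> Y"
    show "(\<Sum>a'\<in>Z. g a' y) = (\<Sum>a'\<in>Z. f a' y) \<and> (\<Sum>a'\<in>Z. g a' y * t a') = (\<Sum>a'\<in>Z. f a' y * u a')"
    proof (cases "y \<in> Yz")
      case True
      then have "a y + b y = f z y + f (c y) y"
        "a y * x + b y * u (c y) = f z y * u z + f (c y) y * u (c y)" using ab by auto
      moreover have "(b y - f (c y) y) * u (c y) = b y * u (c y) - f (c y) y * u (c y)"
        by (simp add: algebra_simps)
      ultimately show ?thesis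
        using col_in[OF True, of "\<lambda>_. 1"] col_in[OF True, of "\<lambda>r. r"] by (intro conjI) simp_all
    next
      case False
      then show ?thesis using col_out[OF y False, of "\<lambda>_. 1"] col_out[OF y False, of "\<lambda>r. r"] by simp
    qed
  qed
  ultimately have "split_cost p0 p1 Z Y f u \<le> split_cost p0 p1 Z Y g t"
    using opt unfolding optimal_split_def by blast
  also have "\<dots> = split_cost p0 p1 Z Y f u + (\<Sum>y\<in>Yz. (a y * prior_div p0 p1 x
      - f z y * prior_div p0 p1 (u z)) + (b y - f (c y) y) * prior_div p0 p1 (u (c y)))"
  proof -
    have "split_cost p0 p1 Z Y g t = (\<Sum>y\<in>Y. (\<Sum>a'\<in>Z. f a' y * prior_div p0 p1 (u a'))
        + (if y \<in> Yz then (a y * prior_div p0 p1 x - f z y * prior_div p0 p1 (u z))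
             + (b y - f (c y) y) * prior_div p0 p1 (u (c y)) else 0))"
      unfolding split_cost_def
    proof (rule sum.cong[OF refl])
      fix y assume y: "y \<in> Y"
      show "(\<Sum>a'\<in>Z. g a' y * prior_div p0 p1 (t a')) = (\<Sum>a'\<in>Z. f a' y * prior_div p0 p1 (u a'))
          + (if y \<in> Yz then (a y * prior_div p0 p1 x - f z y * prior_div p0 p1 (u z))
             + (b y - f (c y) y) * prior_div p0 p1 (u (c y)) else 0)"
        using col_in[of y "prior_div p0 p1"] col_out[OF y, of "prior_div p0 p1"]
        by (cases "y \<in> Yz") simp_all
    qed
    then show ?thesis
      using fin(2) Yz(1) by (simp add: split_cost_def sum.distrib sum.If_cases Int_absorb1)
  qed
  finally show ?thesis by (simp add: sum.distrib sum_subtractf algebra_simps)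
qed

lemma two_point_mean:
  fixes a b s c :: real
  assumes "a > 0" "b > 0" "s \<noteq> c"
  shows "((a*s + b*c)/(a+b) - s) * (c - (a*s + b*c)/(a+b)) > 0"
    and "(a+b) * (c - (a*s + b*c)/(a+b)) / (c - s) = a"
    and "(a+b) * ((a*s + b*c)/(a+b) - s) / (c - s) = b"
proof -
  have e: "(a*s + b*c)/(a+b) - s = b * (c - s) / (a+b)" "c - (a*s + b*c)/(a+b) = a * (c - s) / (a+b)"
    using assms by (simp_all add: field_simps)
  have "(a * b) * (c - s)^2 / (a+b)^2 > 0" using assms by simp
  then show "((a*s + b*c)/(a+b) - s) * (c - (a*s + b*c)/(a+b)) > 0"
    unfolding e by (simp add: power2_eq_square field_simps)
  show "(a+b) * (c - (a*s + b*c)/(a+b)) / (c - s) = a"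
    "(a+b) * ((a*s + b*c)/(a+b) - s) / (c - s) = b"
    unfolding e using assms by simp_all
qed

lemma optimal_split_posterior_attained:
  assumes p: "0 < p0" "0 < p1" and opt: "optimal_split p0 p1 Z Y f u"
    and fin: "finite Z" "finite Y"
    and u: "\<forall>z\<in>Z. 0 \<le> u z \<and> u z \<le> 1" and f: "\<forall>z\<in>Z. \<forall>y\<in>Y. 0 \<le> f z y"
    and z: "z \<in> Z" "\<exists>y\<in>Y. f z y > 0" and col: "\<forall>y\<in>Y. (\<Sum>a\<in>Z. f a y) > 0"
  shows "\<exists>y\<in>Y. (\<Sum>a\<in>Z. f a y * u a) = (\<Sum>a\<in>Z. f a y) * u z"
proof (rule ccontr)
  assume none: "\<not> ?thesis"
  define V where "V y = (\<Sum>a\<in>Z. f a y * u a) / (\<Sum>a\<in>Z. f a y)" for y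
  have mean: "(\<Sum>a\<in>Z. f a y * u a) = (\<Sum>a\<in>Z. f a y) * V y" if "y \<in> Y" for y
    unfolding V_def using col that by (simp add: less_imp_neq[symmetric])
  define Yz where "Yz = {y\<in>Y. f z y > 0}"
  have Yz: "finite Yz" "Yz \<noteq> {}" "Yz \<subseteq> Y" "\<forall>y\<in>Y - Yz. f z y = 0"
    using fin z f unfolding Yz_def by force+
  have "\<forall>y\<in>Yz. \<exists>a\<in>Z. f a y > 0 \<and> (u a - V y) * (u z - V y) < 0"
  proof
    fix y assume y: "y \<in> Yz"
    then have "u z \<noteq> V y" using none mean[of y] Yz by auto
    then show "\<exists>a\<in>Z. f a y > 0 \<and> (u a - V y) * (u z - V y) < 0"
      using weighted_mean_opposite_side[OF fin(1), of "\<lambda>a. f a y"] y Yz_def f z mean by auto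
  qed
  then obtain c where c: "\<forall>y\<in>Yz. c y \<in> Z \<and> f (c y) y > 0 \<and> (u (c y) - V y) * (u z - V y) < 0"
    by metis
  have cz: "c y \<noteq> z" "u (c y) \<noteq> u z" if "y \<in> Yz" for y using c that by fastforce+
  define M where "M y = f z y + f (c y) y" for y
  define mu where "mu y = (f z y * u z + f (c y) y * u (c y)) / M y" for y
  have M: "M y > 0" if "y \<in> Yz" for y unfolding M_def using c that Yz_def by auto
  have two_point: "(mu y - u z) * (u (c y) - mu y) > 0"
    "M y * (u (c y) - mu y) / (u (c y) - u z) = f z y"
    "M y * (mu y - u z) / (u (c y) - u z) = f (c y) y" if "y \<in> Yz" for y
  proof -
    have "f z y > 0" "f (c y) y > 0" "u z \<noteq> u (c y)"
      using c cz(2)[OF that] that unfolding Yz_def by auto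
    from two_point_mean[OF this] show "(mu y - u z) * (u (c y) - mu y) > 0"
      "M y * (u (c y) - mu y) / (u (c y) - u z) = f z y"
      "M y * (mu y - u z) / (u (c y) - u z) = f (c y) y"
      unfolding M_def mu_def by simp_all
  qed
  obtain x where x: "0 \<le> x" "x \<le> 1" "\<forall>y\<in>Yz. (x - mu y) * (u (c y) - mu y) < 0"
    and descent: "(\<Sum>y\<in>Yz. M y * chord p0 p1 (u (c y)) (mu y) x)
      < (\<Sum>y\<in>Yz. M y * chord p0 p1 (u (c y)) (mu y) (u z))"
    using chord_sum_descent[OF p Yz(1,2), of "u z" M "\<lambda>y. u (c y)" mu] u z M c two_point(1)
    by auto
  have cx: "u (c y) \<noteq> x" if "y \<in> Yz" for y using x(3) that by fastforce
  define a where "a y = M y * (u (c y) - mu y) / (u (c y) - x)" for y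
  define b where "b y = M y * (mu y - x) / (u (c y) - x)" for y
  have "(\<Sum>y\<in>Yz. f z y * prior_div p0 p1 (u z) + f (c y) y * prior_div p0 p1 (u (c y)))
      \<le> (\<Sum>y\<in>Yz. a y * prior_div p0 p1 x + b y * prior_div p0 p1 (u (c y)))"
  proof (rule optimal_split_relocate[OF opt fin u f z(1) x(1,2) Yz(3,4)])
    show "\<forall>y\<in>Yz. c y \<in> Z \<and> c y \<noteq> z" using c cz by blast
    show "\<forall>y\<in>Yz. 0 \<le> a y \<and> 0 \<le> b y \<and> a y + b y = f z y + f (c y) y \<and>
        a y * x + b y * u (c y) = f z y * u z + f (c y) y * u (c y)"
    proof
      fix y assume y: "y \<in> Yz"
      have "a y > 0" "b y > 0"
        using chord_weights_pos[OF M[OF y] x(3)[rule_format, OF y]] unfolding a_def b_def .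
      moreover have "a y + b y = M y" "a y * x + b y * u (c y) = M y * mu y"
        using chord_weights(1,2)[OF cx[OF y]] unfolding a_def b_def .
      moreover have "M y * mu y = f z y * u z + f (c y) y * u (c y)"
        using M[OF y] unfolding mu_def by simp
      ultimately show "0 \<le> a y \<and> 0 \<le> b y \<and> a y + b y = f z y + f (c y) y \<and>
          a y * x + b y * u (c y) = f z y * u z + f (c y) y * u (c y)"
        unfolding M_def by simp
    qed
  qed
  also have "\<dots> = (\<Sum>y\<in>Yz. M y * chord p0 p1 (u (c y)) (mu y) x)"
    using chord_weights(3)[OF cx] unfolding a_def b_def by simp
  also have "\<dots> < (\<Sum>y\<in>Yz. M y * chord p0 p1 (u (c y)) (mu y) (u z))"
    by (rule descent)
  also have "\<dots> = (\<Sum>y\<in>Yz. f z y * prior_div p0 p1 (u z) + f (c y) y * prior_div p0 p1 (u (c y)))"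
  proof (rule sum.cong[OF refl])
    fix y assume y: "y \<in> Yz"
    then show "M y * chord p0 p1 (u (c y)) (mu y) (u z)
        = f z y * prior_div p0 p1 (u z) + f (c y) y * prior_div p0 p1 (u (c y))"
      using chord_weights(3)[where c="u (c y)" and x="u z" and M="M y" and m="mu y"]
        two_point(2,3)[OF y] cz[OF y] by simp
  qed
  finally show False by simp
qed

lemma optimal_split_nearest_posteriors:
  assumes p: "0 < p0" "0 < p1" and opt: "optimal_split p0 p1 Z Y f u"
    and fin: "finite Z" "finite Y"
    and u: "\<forall>z\<in>Z. 0 \<le> u z \<and> u z \<le> 1" and f: "\<forall>z\<in>Z. \<forall>y\<in>Y. 0 \<le> f z y"
    and y: "y \<in> Y" and z: "z \<in> Z" "f z y > 0"
    and mean: "(\<Sum>a\<in>Z. f a y * u a) = (\<Sum>a\<in>Z. f a y) * v"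
  shows "(u z \<le> v \<and> (\<forall>z'\<in>Z. u z' \<le> v \<longrightarrow> u z' \<le> u z))
    \<or> (u z \<ge> v \<and> (\<forall>z'\<in>Z. u z' \<ge> v \<longrightarrow> u z' \<ge> u z))"
proof -
  have partner: "\<exists>a\<in>Z. f a y > 0 \<and> (u a - v) * (u z - v) < 0" if "u z \<noteq> v"
    using weighted_mean_opposite_side[OF fin(1), of "\<lambda>a. f a y" z u v] f y z mean that by auto
  note between = optimal_split_no_point_between[OF p opt fin u f y]
  show ?thesis
  proof (cases "u z \<le> v")
    case True
    have "u z' \<le> u z" if "z' \<in> Z" "u z' \<le> v" for z'
    proof (rule ccontr)
      assume "\<not> u z' \<le> u z"
      then have "u z - v < 0" using that by linarith
      moreover obtain a where "a \<in> Z" "f a y > 0" "(u a - v) * (u z - v) < 0"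
        using partner \<open>u z - v < 0\<close> by force
      ultimately have "a \<in> Z" "f a y > 0" "u a > v" by (auto simp: mult_less_0_iff)
      then show False using between[OF z(1) that(1) \<open>a \<in> Z\<close> z(2)] \<open>\<not> u z' \<le> u z\<close> that by simp
    qed
    then show ?thesis using True by blast
  next
    case False
    have "u z' \<ge> u z" if "z' \<in> Z" "u z' \<ge> v" for z'
    proof (rule ccontr)
      assume "\<not> u z' \<ge> u z"
      have "u z - v > 0" using False by linarith
      moreover obtain a where "a \<in> Z" "f a y > 0" "(u a - v) * (u z - v) < 0"
        using partner \<open>u z - v > 0\<close> by force
      ultimately have "a \<in> Z" "f a y > 0" "u a < v" by (auto simp: mult_less_0_iff)
      then show False using between[OF \<open>a \<in> Z\<close> that(1) z(1) _ z(2)] \<open>\<not> u z' \<ge> u z\<close> that by simp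
    qed
    then show ?thesis using False by auto
  qed
qed

section \<open>Channels\<close>

lemma sum_inX: "(\<Sum>x\<in>inX. h x) = h 0 + h (1::nat)"
  unfolding inX_def by simp

lemma post_one:
  assumes "p 0 + p 1 = 1" "outp p C a > 0"
  shows "post p C a 1 = 1 - post p C a 0"
  using assms unfolding post_def outp_def sum_inX by (simp add: field_simps)

lemma outp_mul_prior_div:
  fixes q c0 c1 p0 p1 :: real
  assumes p: "0 < p0" "0 < p1" and q: "q = p0*c0 + p1*c1" "q > 0"
  shows "q * prior_div p0 p1 (p0*c0/q)
    = (if p0*c0 = 0 then 0 else p0*c0 * ln (c0/q)) + (if p1*c1 = 0 then 0 else p1*c1 * ln (c1/q))"
proof -
  have e1: "p0*c0/q/p0 = c0/q" and e3: "p1*c1/q/p1 = c1/q" using p by simp_all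
  have e2: "1 - p0*c0/q = p1*c1/q" using q by (simp add: field_simps)
  have "q * prior_div p0 p1 (p0*c0/q) = q*(p0*c0/q) * ln (c0/q) + q*(p1*c1/q) * ln (c1/q)"
    unfolding prior_div_def e1 e2 e3 by (simp add: distrib_left mult.assoc)
  then show ?thesis using q by simp
qed

lemma mutual_info_eq_sum_prior_div:
  assumes p: "p 0 > 0" "p 1 > 0" and pos: "\<forall>a\<in>A. outp p C a > 0"
  shows "mutual_info p C A = (\<Sum>a\<in>A. outp p C a * prior_div (p 0) (p 1) (post p C a 0))"
proof -
  have "mutual_info p C A = (\<Sum>a\<in>A. \<Sum>x\<in>inX.
      (if p x * C x a = 0 then 0 else p x * C x a * ln (C x a / outp p C a)))"
    unfolding mutual_info_def by (rule sum.swap)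
  also have "\<dots> = (\<Sum>a\<in>A. outp p C a * prior_div (p 0) (p 1) (post p C a 0))"
  proof (rule sum.cong[OF refl])
    fix a assume a: "a \<in> A"
    have "outp p C a = p 0 * C 0 a + p 1 * C 1 a" unfolding outp_def sum_inX by simp
    from outp_mul_prior_div[OF p this pos[rule_format, OF a]] show "(\<Sum>x\<in>inX.
        (if p x * C x a = 0 then 0 else p x * C x a * ln (C x a / outp p C a)))
        = outp p C a * prior_div (p 0) (p 1) (post p C a 0)"
      unfolding sum_inX post_def by simp
  qed
  finally show ?thesis .
qed

lemma channel_reindex_nat:
  fixes Q :: "nat \<Rightarrow> 'z \<Rightarrow> real" and Phi :: "'z \<Rightarrow> 'y \<Rightarrow> real"
  assumes Q: "is_channel Q Z" and deg: "degraded_via W Y Q Z Phi"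
  shows "\<exists>(Z' :: nat set) Q' Phi'. is_channel Q' Z' \<and> card Z' = card Z \<and>
    degraded_via W Y Q' Z' Phi' \<and> mutual_info p Q' Z' = mutual_info p Q Z"
proof -
  have "finite Z" using Q unfolding is_channel_def by simp
  then obtain h where h: "bij_betw h {0..<card Z} Z" using ex_bij_betw_nat_finite by blast
  have reindex: "(\<Sum>n\<in>{0..<card Z}. F (h n)) = (\<Sum>z\<in>Z. F z)" for F :: "'z \<Rightarrow> real"
    by (rule sum.reindex_bij_betw[OF h])
  have hZ: "h n \<in> Z" if "n \<in> {0..<card Z}" for n using h that by (auto dest: bij_betwE)
  define Q' where "Q' x n = Q x (h n)" for x n
  define Phi' where "Phi' n = Phi (h n)" for n
  have "mutual_info p Q' {0..<card Z} = mutual_info p Q Z"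
    unfolding mutual_info_def outp_def Q'_def
    by (intro sum.cong refl) (rule sum.reindex_bij_betw[OF h])
  moreover have "is_channel Q' {0..<card Z}"
    using Q hZ unfolding is_channel_def Q'_def by (simp add: reindex)
  moreover have "(\<Sum>n\<in>{0..<card Z}. Q x (h n) * Phi (h n) y) = (\<Sum>z\<in>Z. Q x z * Phi z y)" for x y
    by (rule reindex)
  then have "degraded_via W Y Q' {0..<card Z} Phi'"
    using deg hZ unfolding degraded_via_def is_stoch_def Q'_def Phi'_def by simp
  ultimately show ?thesis by (intro exI[of _ "{0..<card Z}"]) auto
qed

lemma split_row_masses:
  fixes W :: "nat \<Rightarrow> 'y \<Rightarrow> real" and g :: "'z \<Rightarrow> 'y \<Rightarrow> real" and t :: "'z \<Rightarrow> real"
  assumes p: "p 0 + p 1 = 1" and W: "is_channel W Y"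
    and col: "\<forall>y\<in>Y. (\<Sum>z\<in>Z. g z y) = outp p W y \<and> (\<Sum>z\<in>Z. g z y * t z) = p 0 * W 0 y"
  shows "(\<Sum>z\<in>Z. \<Sum>y\<in>Y. g z y) = 1" and "(\<Sum>z\<in>Z. (\<Sum>y\<in>Y. g z y) * t z) = p 0"
proof -
  have W0: "(\<Sum>y\<in>Y. W 0 y) = 1" and W1: "(\<Sum>y\<in>Y. W 1 y) = 1"
    using W unfolding is_channel_def inX_def by auto
  have "(\<Sum>z\<in>Z. \<Sum>y\<in>Y. g z y) = (\<Sum>y\<in>Y. p 0 * W 0 y + p 1 * W 1 y)"
    using col by (subst sum.swap) (simp add: outp_def sum_inX)
  then show "(\<Sum>z\<in>Z. \<Sum>y\<in>Y. g z y) = 1"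
    using W0 W1 p by (simp add: sum.distrib sum_distrib_left[symmetric])
  have "(\<Sum>z\<in>Z. (\<Sum>y\<in>Y. g z y) * t z) = (\<Sum>y\<in>Y. p 0 * W 0 y)"
    unfolding sum_distrib_right using col by (subst sum.swap) simp
  then show "(\<Sum>z\<in>Z. (\<Sum>y\<in>Y. g z y) * t z) = p 0"
    using W0 by (simp add: sum_distrib_left[symmetric])
qed

lemma split_realized_by_channel:
  fixes W :: "nat \<Rightarrow> 'y \<Rightarrow> real" and g :: "'z \<Rightarrow> 'y \<Rightarrow> real" and t :: "'z \<Rightarrow> real"
  assumes p: "p 0 > 0" "p 1 > 0" "p 0 + p 1 = 1" and W: "is_channel W Y" and finZ: "finite Z"
    and t: "\<forall>z\<in>Z. 0 \<le> t z \<and> t z \<le> 1" and g: "\<forall>z\<in>Z. \<forall>y\<in>Y. 0 \<le> g z y"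
    and col: "\<forall>y\<in>Y. (\<Sum>z\<in>Z. g z y) = outp p W y \<and> (\<Sum>z\<in>Z. g z y * t z) = p 0 * W 0 y"
  shows "\<exists>Z' \<subseteq> Z. \<exists>Q' Phi'. is_channel Q' Z' \<and> degraded_via W Y Q' Z' Phi' \<and>
    mutual_info p Q' Z' = split_cost (p 0) (p 1) Z Y g t"
proof -
  have finY: "finite Y" using W unfolding is_channel_def by simp
  define m where "m z = (\<Sum>y\<in>Y. g z y)" for z
  define Z' where "Z' = {z\<in>Z. m z > 0}"
  have Z': "finite Z'" "Z' \<subseteq> Z" using finZ unfolding Z'_def by auto
  have m_nonneg: "m z \<ge> 0" if "z \<in> Z" for z unfolding m_def using g that by (auto intro: sum_nonneg)
  have m_outside: "m z = 0" if "z \<in> Z" "z \<notin> Z'" for z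
    using m_nonneg[OF that(1)] that unfolding Z'_def by auto
  have g_outside: "g z y = 0" if "z \<in> Z" "z \<notin> Z'" "y \<in> Y" for z y
    using m_outside[OF that(1,2)] that sum_nonneg_eq_0_iff[OF finY, of "g z"] g
    unfolding m_def by auto
  have restrict: "(\<Sum>z\<in>Z'. F z) = (\<Sum>z\<in>Z. F z)"
    if "\<And>z. z \<in> Z \<Longrightarrow> z \<notin> Z' \<Longrightarrow> F z = 0" for F :: "'z \<Rightarrow> real"
    by (rule sum.mono_neutral_left[OF finZ Z'(2)]) (use that in auto)
  have restrict_m: "(\<Sum>z\<in>Z'. m z * F z) = (\<Sum>z\<in>Z. m z * F z)" for F
    by (rule restrict) (simp add: m_outside)
  have mass: "(\<Sum>z\<in>Z. m z) = 1" and moment: "(\<Sum>z\<in>Z. m z * t z) = p 0"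
    using split_row_masses[OF p(3) W col] unfolding m_def .
  define Q' :: "nat \<Rightarrow> 'z \<Rightarrow> real" where
    "Q' x z = (if x = 0 then m z * t z / p 0 else m z * (1 - t z) / p 1)" for x z
  define Phi' where "Phi' z y = g z y / m z" for z y
  have m_pos: "m z > 0" "z \<in> Z" if "z \<in> Z'" for z using that unfolding Z'_def by auto
  have outp_Q': "outp p Q' z = m z" for z
    unfolding outp_def sum_inX Q'_def using p by (simp add: field_simps)
  have "is_channel Q' Z'"
    unfolding is_channel_def
  proof (intro conjI ballI)
    fix x assume x: "x \<in> inX"
    show "0 \<le> Q' x z" if "z \<in> Z'" for z
      using m_pos[OF that] t p unfolding Q'_def by auto
    have "(\<Sum>z\<in>Z'. Q' 0 z) = 1" "(\<Sum>z\<in>Z'. Q' 1 z) = 1"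
      using restrict_m[of "\<lambda>z. t z / p 0"] restrict_m[of "\<lambda>z. (1 - t z) / p 1"] mass moment p
      by (simp_all add: Q'_def sum_divide_distrib[symmetric] right_diff_distrib sum_subtractf)
    then show "(\<Sum>z\<in>Z'. Q' x z) = 1" using x unfolding inX_def by auto
  qed (use Z' in simp)
  moreover have "degraded_via W Y Q' Z' Phi'"
    unfolding degraded_via_def is_stoch_def
  proof (intro conjI ballI)
    fix z y assume z: "z \<in> Z'" and y: "y \<in> Y"
    show "0 \<le> Phi' z y" unfolding Phi'_def using g m_pos[OF z] y by simp
  next
    fix z assume "z \<in> Z'"
    then show "(\<Sum>y\<in>Y. Phi' z y) = 1"
      using m_pos(1)[OF \<open>z \<in> Z'\<close>] unfolding Phi'_def m_def by (simp add: sum_divide_distrib[symmetric])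
  next
    fix x y assume x: "x \<in> inX" and y: "y \<in> Y"
    have "(\<Sum>z\<in>Z'. Q' x z * Phi' z y)
        = (\<Sum>z\<in>Z'. if x = 0 then g z y * t z / p 0 else g z y * (1 - t z) / p 1)"
    proof (rule sum.cong[OF refl])
      fix z assume "z \<in> Z'"
      then have "m z \<noteq> 0" using m_pos by force
      then show "Q' x z * Phi' z y = (if x = 0 then g z y * t z / p 0 else g z y * (1 - t z) / p 1)"
        unfolding Q'_def Phi'_def by simp
    qed
    also have "\<dots> = (\<Sum>z\<in>Z. if x = 0 then g z y * t z / p 0 else g z y * (1 - t z) / p 1)"
      by (rule restrict) (simp add: g_outside y)
    also have "\<dots> = W x y"
      using col y p x
      by (auto simp: inX_def outp_def sum_inX sum_divide_distrib[symmetric] right_diff_distrib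
          sum_subtractf)
    finally show "W x y = (\<Sum>z\<in>Z'. Q' x z * Phi' z y)" by simp
  qed
  moreover have "mutual_info p Q' Z' = split_cost (p 0) (p 1) Z Y g t"
  proof -
    have "post p Q' z 0 = t z" if "z \<in> Z'" for z
      unfolding post_def outp_Q' using m_pos[OF that] p by (simp add: Q'_def)
    then have "mutual_info p Q' Z' = (\<Sum>z\<in>Z'. m z * prior_div (p 0) (p 1) (t z))"
      using mutual_info_eq_sum_prior_div[of p Z' Q'] p m_pos by (simp add: outp_Q')
    also have "\<dots> = (\<Sum>z\<in>Z. m z * prior_div (p 0) (p 1) (t z))" by (rule restrict_m)
    finally show ?thesis
      unfolding split_cost_def m_def sum_distrib_right by (subst sum.swap) simp
  qed
  ultimately show ?thesis using Z'(2) by blast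
qed

lemma channel_post_bounds:
  assumes "p 0 > 0" "p 1 > 0" "is_channel C A" "a \<in> A" "outp p C a > 0"
  shows "0 \<le> post p C a 0 \<and> post p C a 0 \<le> 1"
proof -
  have "C 0 a \<ge> 0" "C 1 a \<ge> 0" using assms(3,4) unfolding is_channel_def inX_def by auto
  then show ?thesis using assms unfolding post_def outp_def sum_inX by (simp add: divide_le_eq_1_pos)
qed

lemma post_eq_if_post_zero_eq:
  assumes "p 0 + p 1 = 1" "outp p C a > 0" "outp p D b > 0" "post p C a 0 = post p D b 0"
  shows "\<forall>x\<in>inX. post p C a x = post p D b x"
  using assms post_one[OF assms(1,2)] post_one[OF assms(1,3)] unfolding inX_def by auto

lemma outp_mul_post:
  assumes "outp p C a > 0"
  shows "outp p C a * post p C a 0 = p 0 * C 0 a"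
  using assms unfolding post_def by simp

lemma degraded_split:
  fixes W :: "nat \<Rightarrow> 'y \<Rightarrow> real" and Q :: "nat \<Rightarrow> 'z \<Rightarrow> real" and Phi :: "'z \<Rightarrow> 'y \<Rightarrow> real"
  assumes p: "p 0 > 0" "p 1 > 0" and Q: "is_channel Q Z" and Q_pos: "\<forall>z\<in>Z. outp p Q z > 0"
    and W_pos: "\<forall>y\<in>Y. outp p W y > 0" and deg: "degraded_via W Y Q Z Phi"
  defines "f \<equiv> \<lambda>z y. outp p Q z * Phi z y" and "u \<equiv> \<lambda>z. post p Q z 0"
  shows "\<forall>z\<in>Z. \<forall>y\<in>Y. 0 \<le> f z y"
    and "\<forall>y\<in>Y. (\<Sum>z\<in>Z. f z y) = outp p W y"
    and "\<forall>y\<in>Y. (\<Sum>z\<in>Z. f z y * u z) = (\<Sum>z\<in>Z. f z y) * post p W y 0"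
    and "\<forall>z\<in>Z. \<exists>y\<in>Y. f z y > 0"
    and "mutual_info p Q Z = split_cost (p 0) (p 1) Z Y f u"
proof -
  have stoch: "\<forall>z\<in>Z. (\<forall>y\<in>Y. Phi z y \<ge> 0) \<and> (\<Sum>y\<in>Y. Phi z y) = 1"
    and W: "\<And>x y. x \<in> inX \<Longrightarrow> y \<in> Y \<Longrightarrow> W x y = (\<Sum>z\<in>Z. Q x z * Phi z y)"
    using deg unfolding degraded_via_def is_stoch_def by auto
  show "\<forall>z\<in>Z. \<forall>y\<in>Y. 0 \<le> f z y" using stoch Q_pos unfolding f_def by (simp add: less_imp_le)
  show mass: "\<forall>y\<in>Y. (\<Sum>z\<in>Z. f z y) = outp p W y"
    using W unfolding f_def outp_def sum_inX inX_def
    by (simp add: algebra_simps sum.distrib sum_distrib_left)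
  have "(\<Sum>z\<in>Z. f z y * u z) = p 0 * W 0 y" if "y \<in> Y" for y
  proof -
    have "f z y * u z = p 0 * (Q 0 z * Phi z y)" if "z \<in> Z" for z
      using outp_mul_post[of p Q z] Q_pos that unfolding f_def u_def
      by (simp add: algebra_simps)
    then have "(\<Sum>z\<in>Z. f z y * u z) = p 0 * (\<Sum>z\<in>Z. Q 0 z * Phi z y)"
      by (simp add: sum_distrib_left)
    then show ?thesis using W[of 0 y] that unfolding inX_def by simp
  qed
  then show "\<forall>y\<in>Y. (\<Sum>z\<in>Z. f z y * u z) = (\<Sum>z\<in>Z. f z y) * post p W y 0"
    using mass outp_mul_post[of p W] W_pos by simp
  show "\<forall>z\<in>Z. \<exists>y\<in>Y. f z y > 0"
  proof
    fix z assume z: "z \<in> Z"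
    then obtain y where "y \<in> Y" "Phi z y > 0"
      using stoch by (metis less_eq_real_def sum.neutral zero_neq_one)
    moreover have "outp p Q z > 0" using Q_pos z by blast
    ultimately show "\<exists>y\<in>Y. f z y > 0" unfolding f_def by (auto intro: mult_pos_pos)
  qed
  have "mutual_info p Q Z = (\<Sum>z\<in>Z. \<Sum>y\<in>Y. f z y * prior_div (p 0) (p 1) (u z))"
    unfolding mutual_info_eq_sum_prior_div[OF p Q_pos] f_def u_def
    using stoch by (simp add: sum_distrib_left[symmetric] sum_distrib_right[symmetric] mult.assoc)
  then show "mutual_info p Q Z = split_cost (p 0) (p 1) Z Y f u"
    unfolding split_cost_def by (subst sum.swap) simp
qed

lemma optimal_split_of_optimal_channel:
  fixes W :: "nat \<Rightarrow> 'y \<Rightarrow> real" and Q :: "nat \<Rightarrow> 'z \<Rightarrow> real" and Phi :: "'z \<Rightarrow> 'y \<Rightarrow> real"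
  assumes p: "p 0 > 0" "p 1 > 0" "p 0 + p 1 = 1" and W: "is_channel W Y"
    and W_pos: "\<forall>y\<in>Y. outp p W y > 0" and Q: "is_channel Q Z" and Q_pos: "\<forall>z\<in>Z. outp p Q z > 0"
    and card: "card Z \<le> L" and deg: "degraded_via W Y Q Z Phi"
    and opt: "\<forall>(Z' :: nat set) Q' Phi'. is_channel Q' Z' \<and> card Z' \<le> L \<and>
                 degraded_via W Y Q' Z' Phi' \<longrightarrow>
                 mutual_info p Q Z - mutual_info p W Y \<le> mutual_info p Q' Z' - mutual_info p W Y"
  shows "optimal_split (p 0) (p 1) Z Y (\<lambda>z y. outp p Q z * Phi z y) (\<lambda>z. post p Q z 0)"
  unfolding optimal_split_def
proof (intro allI impI)
  note split = degraded_split[OF p(1,2) Q Q_pos W_pos deg]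
  have finZ: "finite Z" using Q unfolding is_channel_def by simp
  fix t g assume t: "\<forall>z\<in>Z. 0 \<le> t z \<and> t z \<le> 1" and g: "\<forall>z\<in>Z. \<forall>y\<in>Y. 0 \<le> g z y"
    and "\<forall>y\<in>Y. (\<Sum>z\<in>Z. g z y) = (\<Sum>z\<in>Z. outp p Q z * Phi z y) \<and>
      (\<Sum>z\<in>Z. g z y * t z) = (\<Sum>z\<in>Z. outp p Q z * Phi z y * post p Q z 0)"
  then have "\<forall>y\<in>Y. (\<Sum>z\<in>Z. g z y) = outp p W y \<and> (\<Sum>z\<in>Z. g z y * t z) = p 0 * W 0 y"
    using split(2,3) W_pos outp_mul_post[of p W] by simp
  then obtain Z'' Q'' Phi'' where "Z'' \<subseteq> Z" "is_channel Q'' Z''" "degraded_via W Y Q'' Z'' Phi''"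
    and "mutual_info p Q'' Z'' = split_cost (p 0) (p 1) Z Y g t"
    using split_realized_by_channel[OF p W finZ t g] by blast
  moreover obtain Z' :: "nat set" and Q' Phi' where "is_channel Q' Z'" "card Z' = card Z''"
    "degraded_via W Y Q' Z' Phi'" "mutual_info p Q' Z' = mutual_info p Q'' Z''"
    using channel_reindex_nat[OF \<open>is_channel Q'' Z''\<close> \<open>degraded_via W Y Q'' Z'' Phi''\<close>] by blast
  moreover have "card Z'' \<le> L" using card_mono[OF finZ \<open>Z'' \<subseteq> Z\<close>] card by simp
  ultimately show "split_cost (p 0) (p 1) Z Y (\<lambda>z y. outp p Q z * Phi z y) (\<lambda>z. post p Q z 0)
      \<le> split_cost (p 0) (p 1) Z Y g t"
    using opt split(5) by force
qed

theorem theorem12: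
  fixes p :: "nat \<Rightarrow> real"
    and W :: "nat \<Rightarrow> 'y \<Rightarrow> real" and Y :: "'y set"
    and Q :: "nat \<Rightarrow> 'z \<Rightarrow> real" and Z :: "'z set"
    and Phi :: "'z \<Rightarrow> 'y \<Rightarrow> real"
    and L :: nat
  assumes p_pos: "\<forall>x\<in>inX. p x > 0"
    and p_sum: "(\<Sum>x\<in>inX. p x) = 1"
    and W_ch: "is_channel W Y"
    and W_out_pos: "\<forall>y\<in>Y. outp p W y > 0"
    and L_ge: "L \<ge> 2"
    and Q_ch: "is_channel Q Z"
    and Q_out_pos: "\<forall>z\<in>Z. outp p Q z > 0"
    and Q_card: "card Z \<le> L"
    and deg: "degraded_via W Y Q Z Phi"
    and opt: "\<forall>(Z' :: nat set) Q' Phi'. is_channel Q' Z' \<and> card Z' \<le> L \<and>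
                 degraded_via W Y Q' Z' Phi' \<longrightarrow>
                 mutual_info p Q Z - mutual_info p W Y \<le> mutual_info p Q' Z' - mutual_info p W Y"
    and distinct: "\<forall>z1\<in>Z. \<forall>z2\<in>Z. z1 \<noteq> z2 \<longrightarrow> (\<exists>x\<in>inX. post p Q z1 x \<noteq> post p Q z2 x)"
  shows "(\<forall>z\<in>Z. \<exists>y\<in>Y. \<forall>x\<in>inX. post p Q z x = post p W y x)
       \<and> (\<forall>y\<in>Y. \<forall>z\<in>Z. Phi z y > 0 \<longrightarrow>
            ((post p Q z 0 \<le> post p W y 0 \<and>
                (\<forall>z'\<in>Z. post p Q z' 0 \<le> post p W y 0 \<longrightarrow> post p Q z' 0 \<le> post p Q z 0))
           \<or> (post p Q z 0 \<ge> post p W y 0 \<and>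
                (\<forall>z'\<in>Z. post p Q z' 0 \<ge> post p W y 0 \<longrightarrow> post p Q z' 0 \<ge> post p Q z 0))))"
proof -
  have p: "p 0 > 0" "p 1 > 0" "p 0 + p 1 = 1" using p_pos p_sum unfolding inX_def by auto
  have fin: "finite Z" "finite Y" using Q_ch W_ch unfolding is_channel_def by auto
  define f where "f z y = outp p Q z * Phi z y" for z y
  define u where "u z = post p Q z 0" for z
  note split = degraded_split[OF p(1,2) Q_ch Q_out_pos W_out_pos deg, folded f_def u_def]
  have u: "\<forall>z\<in>Z. 0 \<le> u z \<and> u z \<le> 1"
    using channel_post_bounds[OF p(1,2) Q_ch] Q_out_pos unfolding u_def by blast
  have opt_split: "optimal_split (p 0) (p 1) Z Y f u"
    using optimal_split_of_optimal_channel[OF p W_ch W_out_pos Q_ch Q_out_pos Q_card deg opt]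
    unfolding f_def u_def by simp
  show ?thesis
  proof (intro conjI ballI impI)
    fix z assume z: "z \<in> Z"
    obtain y where y: "y \<in> Y" "(\<Sum>a\<in>Z. f a y * u a) = (\<Sum>a\<in>Z. f a y) * u z"
      using optimal_split_posterior_attained[OF p(1,2) opt_split fin u split(1) z]
        split(2,4) W_out_pos z by force
    then have "post p W y 0 = post p Q z 0"
      using split(2,3) W_out_pos unfolding u_def by force
    then show "\<exists>y\<in>Y. \<forall>x\<in>inX. post p Q z x = post p W y x"
      using post_eq_if_post_zero_eq[OF p(3)] Q_out_pos W_out_pos z y(1) by metis
  next
    fix y z assume "y \<in> Y" "z \<in> Z" "Phi z y > 0"
    then show "(post p Q z 0 \<le> post p W y 0 \<and>
          (\<forall>z'\<in>Z. post p Q z' 0 \<le> post p W y 0 \<longrightarrow> post p Q z' 0 \<le> post p Q z 0))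
        \<or> (post p Q z 0 \<ge> post p W y 0 \<and>
          (\<forall>z'\<in>Z. post p Q z' 0 \<ge> post p W y 0 \<longrightarrow> post p Q z' 0 \<ge> post p Q z 0))"
      using optimal_split_nearest_posteriors[OF p(1,2) opt_split fin u split(1), of y z]
        split(3) Q_out_pos unfolding f_def u_def by simp
  qed
qed

end
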